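(* Let $p$ be a prime and let $G$ be a finite $p$-group. Then the number of maximal abelian subgroups of $G$ is congruent to $1$ modulo $p$.
   Context: A subgroup $A$ of a group $G$ is called maximal abelian if $A$ is abelian and is not properly contained in any abelian subgroup of $G$, i.e. $A$ is maximal with respect to inclusion among the abelian subgroups of $G$. (Such subgroups need not be maximal subgroups of $G$ and may have different orders.) *)

theory Defs
  imports "HOL-Algebra.Algebra"
begin

definition abelian_subgroup :: "'a set \<Rightarrow> ('a, 'b) monoid_scheme \<Rightarrow> bool" where
  "abelian_subgroup A G \<longleftrightarrow> subgroup A G \<and>
     (\<forall>x\<in>A. \<forall>y\<in>A. x \<otimes>\<^bsub>G\<^esub> y = y \<otimes>\<^bsub>G\<^esub> x)"

definition maximal_abelian_subgroup :: "'a set \<Rightarrow> ('a, 'b) monoid_scheme \<Rightarrow> bool" where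
  "maximal_abelian_subgroup A G \<longleftrightarrow> abelian_subgroup A G \<and>
     (\<forall>B. abelian_subgroup B G \<and> A \<subseteq> B \<longrightarrow> B = A)"

end

(* Induction on the order of G.  If G is abelian, G itself is its only maximal abelian
   subgroup.  Otherwise the centre Z is contained properly in every maximal abelian
   subgroup A (these are exactly the self-centralising subgroups), so p|Z| divides |A| and
   |G|.  Counting the pairs (A, x) with x in A - Z gives
     sum_A (|A| - |Z|) = sum_{x in G - Z} f x,
   where f x, the number of maximal abelian subgroups containing x, is the number of
   maximal abelian subgroups of the proper subgroup C_G(x); so f x = 1 (mod p) by
   induction.  As f is constant on the cosets of Z, the right-hand side is congruent to
   |G| - |Z| modulo p|Z|, hence m|Z| = |Z| (mod p|Z|) for the number m of maximal abelian
   subgroups, i.e. m = 1 (mod p). *)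

theory Submission
  imports Defs
begin

definition centralizer :: "('a, 'b) monoid_scheme \<Rightarrow> 'a set \<Rightarrow> 'a set" where
  "centralizer G S = {g \<in> carrier G. \<forall>s\<in>S. g \<otimes>\<^bsub>G\<^esub> s = s \<otimes>\<^bsub>G\<^esub> g}"

definition center :: "('a, 'b) monoid_scheme \<Rightarrow> 'a set" where
  "center G = centralizer G (carrier G)"

lemma centralizerI:
  "g \<in> carrier G \<Longrightarrow> (\<And>s. s \<in> S \<Longrightarrow> g \<otimes>\<^bsub>G\<^esub> s = s \<otimes>\<^bsub>G\<^esub> g) \<Longrightarrow> g \<in> centralizer G S"
  unfolding centralizer_def by blast

lemma centralizerD:
  "g \<in> centralizer G S \<Longrightarrow> s \<in> S \<Longrightarrow> g \<otimes>\<^bsub>G\<^esub> s = s \<otimes>\<^bsub>G\<^esub> g"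
  unfolding centralizer_def by blast

lemma centralizer_subset_carrier: "centralizer G S \<subseteq> carrier G"
  unfolding centralizer_def by blast

lemma centralizer_antimono: "S \<subseteq> T \<Longrightarrow> centralizer G T \<subseteq> centralizer G S"
  unfolding centralizer_def by blast

lemma subset_double_centralizer:
  assumes "S \<subseteq> carrier G"
  shows "S \<subseteq> centralizer G (centralizer G S)"
proof (intro subsetI centralizerI)
  show "x \<in> carrier G" if "x \<in> S" for x
    using that assms by blast
  show "x \<otimes>\<^bsub>G\<^esub> g = g \<otimes>\<^bsub>G\<^esub> x" if "x \<in> S" "g \<in> centralizer G S" for x g
    using centralizerD[OF that(2,1)] by simp
qed

lemma centralizer_restrict_carrier:
  "H \<subseteq> carrier G \<Longrightarrow> centralizer (G\<lparr>carrier := H\<rparr>) S = H \<inter> centralizer G S"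
  unfolding centralizer_def by auto

lemma (in group) commute_inv:
  assumes g: "g \<in> carrier G" and s: "s \<in> carrier G" and gs: "g \<otimes> s = s \<otimes> g"
  shows "inv g \<otimes> s = s \<otimes> inv g"
proof -
  have "inv g \<otimes> s = inv g \<otimes> (s \<otimes> g) \<otimes> inv g"
    using g s by (simp add: m_assoc)
  also have "\<dots> = inv g \<otimes> (g \<otimes> s) \<otimes> inv g"
    by (simp only: gs)
  also have "\<dots> = s \<otimes> inv g"
    using g s by (simp flip: m_assoc)
  finally show ?thesis .
qed

lemma (in group) commute_mult:
  assumes g: "g \<in> carrier G" and h: "h \<in> carrier G" and s: "s \<in> carrier G"
    and gs: "g \<otimes> s = s \<otimes> g" and hs: "h \<otimes> s = s \<otimes> h"
  shows "g \<otimes> h \<otimes> s = s \<otimes> (g \<otimes> h)"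
proof -
  have "g \<otimes> h \<otimes> s = g \<otimes> (h \<otimes> s)"
    using g h s by (simp add: m_assoc)
  also have "\<dots> = g \<otimes> s \<otimes> h"
    using g h s by (simp add: hs m_assoc)
  also have "\<dots> = s \<otimes> (g \<otimes> h)"
    using g h s by (simp add: gs m_assoc)
  finally show ?thesis .
qed

lemma (in group) subgroup_centralizer:
  assumes "S \<subseteq> carrier G"
  shows "subgroup (centralizer G S) G"
proof (rule subgroupI)
  show "centralizer G S \<subseteq> carrier G"
    by (rule centralizer_subset_carrier)
  have "\<one> \<in> centralizer G S"
    using assms by (intro centralizerI) auto
  then show "centralizer G S \<noteq> {}"
    by blast
  show "inv g \<in> centralizer G S" if "g \<in> centralizer G S" for g
  proof (rule centralizerI)
    have g: "g \<in> carrier G"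
      using that centralizer_subset_carrier[of G S] by blast
    then show "inv g \<in> carrier G"
      by simp
    show "inv g \<otimes> s = s \<otimes> inv g" if "s \<in> S" for s
      using commute_inv[OF g _ centralizerD[OF \<open>g \<in> centralizer G S\<close> that]] that assms by blast
  qed
  show "g \<otimes> h \<in> centralizer G S" if "g \<in> centralizer G S" "h \<in> centralizer G S" for g h
  proof (rule centralizerI)
    have gh: "g \<in> carrier G" "h \<in> carrier G"
      using that centralizer_subset_carrier[of G S] by blast+
    then show "g \<otimes> h \<in> carrier G"
      by simp
    show "g \<otimes> h \<otimes> s = s \<otimes> (g \<otimes> h)" if "s \<in> S" for s
      using commute_mult[OF gh _ centralizerD[OF _ that] centralizerD[OF _ that]] that assms
        \<open>g \<in> centralizer G S\<close> \<open>h \<in> centralizer G S\<close> by blast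
  qed
qed

lemma abelian_subgroup_iff_subset_centralizer:
  "abelian_subgroup A G \<longleftrightarrow> subgroup A G \<and> A \<subseteq> centralizer G A"
proof
  assume "abelian_subgroup A G"
  then have A: "subgroup A G" "\<And>x y. x \<in> A \<Longrightarrow> y \<in> A \<Longrightarrow> x \<otimes>\<^bsub>G\<^esub> y = y \<otimes>\<^bsub>G\<^esub> x"
    unfolding abelian_subgroup_def by blast+
  have "A \<subseteq> centralizer G A"
  proof (intro subsetI centralizerI)
    show "x \<in> carrier G" if "x \<in> A" for x
      using A(1) that by (rule subgroup.mem_carrier)
  qed (use A(2) in blast)
  with A show "subgroup A G \<and> A \<subseteq> centralizer G A"
    by blast
next
  assume A: "subgroup A G \<and> A \<subseteq> centralizer G A"
  then have "x \<otimes>\<^bsub>G\<^esub> y = y \<otimes>\<^bsub>G\<^esub> x" if "x \<in> A" "y \<in> A" for x y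
    using centralizerD[of x G A y] that by blast
  with A show "abelian_subgroup A G"
    unfolding abelian_subgroup_def by blast
qed

lemma insert_subset_centralizer:
  assumes A: "A \<subseteq> centralizer G A" and y: "y \<in> centralizer G A"
  shows "insert y A \<subseteq> centralizer G (insert y A)"
proof (intro subsetI centralizerI)
  show "a \<in> carrier G" if "a \<in> insert y A" for a
    using that A y centralizer_subset_carrier[of G A] by blast
  show "a \<otimes>\<^bsub>G\<^esub> b = b \<otimes>\<^bsub>G\<^esub> a" if "a \<in> insert y A" "b \<in> insert y A" for a b
    using that
  proof (elim insertE)
    show "a \<otimes>\<^bsub>G\<^esub> b = b \<otimes>\<^bsub>G\<^esub> a" if "a = y" "b \<in> A"
      using centralizerD[OF y that(2)] by (simp add: that(1))
    show "a \<otimes>\<^bsub>G\<^esub> b = b \<otimes>\<^bsub>G\<^esub> a" if "a \<in> A" "b = y"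
      using centralizerD[OF y that(1)] by (simp add: that(2))
    show "a \<otimes>\<^bsub>G\<^esub> b = b \<otimes>\<^bsub>G\<^esub> a" if "a \<in> A" "b \<in> A"
      using centralizerD[OF subsetD[OF A that(1)] that(2)] .
  qed simp
qed

lemma (in group) abelian_subgroup_double_centralizer:
  assumes "S \<subseteq> centralizer G S"
  shows "abelian_subgroup (centralizer G (centralizer G S)) G"
proof -
  have "centralizer G (centralizer G S) \<subseteq> centralizer G S"
    using assms by (rule centralizer_antimono)
  then have "centralizer G (centralizer G S) \<subseteq> centralizer G (centralizer G (centralizer G S))"
    by (rule centralizer_antimono)
  then show ?thesis
    by (simp add: abelian_subgroup_iff_subset_centralizer subgroup_centralizer centralizer_subset_carrier)
qed

lemma (in group) maximal_abelian_subgroup_iff_self_centralizing: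
  "maximal_abelian_subgroup A G \<longleftrightarrow> centralizer G A = A"
proof
  assume max: "maximal_abelian_subgroup A G"
  then have A: "subgroup A G" "A \<subseteq> centralizer G A"
    by (auto simp: maximal_abelian_subgroup_def abelian_subgroup_iff_subset_centralizer)
  have "y \<in> A" if y: "y \<in> centralizer G A" for y
  proof -
    let ?S = "insert y A"
    have "?S \<subseteq> centralizer G ?S"
      using A(2) y by (rule insert_subset_centralizer)
    then have "abelian_subgroup (centralizer G (centralizer G ?S)) G"
      by (rule abelian_subgroup_double_centralizer)
    moreover have S: "?S \<subseteq> centralizer G (centralizer G ?S)"
      using \<open>?S \<subseteq> centralizer G ?S\<close> centralizer_subset_carrier[of G ?S]
      by (intro subset_double_centralizer) blast
    ultimately have "centralizer G (centralizer G ?S) = A"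
      using max by (auto simp: maximal_abelian_subgroup_def)
    then show ?thesis
      using S by blast
  qed
  then show "centralizer G A = A"
    using A by blast
next
  assume self: "centralizer G A = A"
  have "abelian_subgroup A G"
    using subgroup_centralizer[of A] centralizer_subset_carrier[of G A] self
    by (simp add: abelian_subgroup_iff_subset_centralizer)
  moreover have "B \<subseteq> A" if "abelian_subgroup B G" "A \<subseteq> B" for B
    using that centralizer_antimono[of A B G] self
    by (auto simp: abelian_subgroup_iff_subset_centralizer)
  ultimately show "maximal_abelian_subgroup A G"
    by (auto simp: maximal_abelian_subgroup_def)
qed

lemma (in group) subgroup_center: "subgroup (center G) G"
  unfolding center_def by (rule subgroup_centralizer) (rule subset_refl)

lemma (in group) centralizer_center: "centralizer G (center G) = carrier G"
proof (intro equalityI subsetI centralizerI)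
  show "g \<otimes> z = z \<otimes> g" if "g \<in> carrier G" "z \<in> center G" for g z
    using centralizerD[of z G "carrier G" g] that by (simp add: center_def)
qed (use centralizer_subset_carrier[of G "center G"] in blast)+

lemma (in group) center_subset_maximal_abelian_subgroup:
  assumes "maximal_abelian_subgroup A G"
  shows "center G \<subseteq> A"
proof -
  have self: "centralizer G A = A"
    using assms by (simp add: maximal_abelian_subgroup_iff_self_centralizing)
  then have "A \<subseteq> carrier G"
    using centralizer_subset_carrier[of G A] by simp
  then show ?thesis
    unfolding center_def using centralizer_antimono[of A "carrier G" G] self by simp
qed

lemma (in group) maximal_abelian_subgroups_of_abelian:
  assumes "center G = carrier G"
  shows "{A. maximal_abelian_subgroup A G} = {carrier G}"
proof -
  have "A = carrier G" if "maximal_abelian_subgroup A G" for A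
    using center_subset_maximal_abelian_subgroup[OF that] assms
      centralizer_subset_carrier[of G A] that
    by (auto simp: maximal_abelian_subgroup_iff_self_centralizing)
  moreover have "maximal_abelian_subgroup (carrier G) G"
    using assms by (simp add: maximal_abelian_subgroup_iff_self_centralizing center_def)
  ultimately show ?thesis
    by blast
qed

lemma (in group) center_psubset_maximal_abelian_subgroup:
  assumes "center G \<noteq> carrier G" and "maximal_abelian_subgroup A G"
  shows "center G \<subset> A"
proof -
  have "center G \<noteq> A"
    using assms centralizer_center by (auto simp: maximal_abelian_subgroup_iff_self_centralizing)
  then show ?thesis
    using center_subset_maximal_abelian_subgroup[OF assms(2)] by blast
qed

lemma (in group) maximal_abelian_subgroups_containing:
  assumes x: "x \<in> carrier G"
  shows "{A. maximal_abelian_subgroup A G \<and> x \<in> A} =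
    {A. maximal_abelian_subgroup A (G\<lparr>carrier := centralizer G {x}\<rparr>)}"
proof -
  let ?C = "centralizer G {x}"
  interpret C: group "G\<lparr>carrier := ?C\<rparr>"
    using x by (simp add: subgroup_imp_group subgroup_centralizer)
  have "centralizer G A = A \<and> x \<in> A \<longleftrightarrow> ?C \<inter> centralizer G A = A" for A
  proof
    assume "centralizer G A = A \<and> x \<in> A"
    then show "?C \<inter> centralizer G A = A"
      using centralizer_antimono[of "{x}" A G] by blast
  next
    assume A: "?C \<inter> centralizer G A = A"
    have "x \<in> centralizer G A"
    proof (rule centralizerI)
      show "x \<otimes> a = a \<otimes> x" if "a \<in> A" for a
      proof -
        have "a \<in> ?C"
          using A that by blast
        then show ?thesis
          using centralizerD[of a G "{x}" x] by simp
      qed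
    qed (rule x)
    moreover have "x \<in> ?C"
      using x by (simp add: centralizer_def)
    ultimately have "x \<in> A"
      using A by blast
    then show "centralizer G A = A \<and> x \<in> A"
      using A centralizer_antimono[of "{x}" A G] by blast
  qed
  then show ?thesis
    by (simp add: C.maximal_abelian_subgroup_iff_self_centralizing
        maximal_abelian_subgroup_iff_self_centralizing
        centralizer_restrict_carrier[OF centralizer_subset_carrier])
qed

lemma (in group) card_subgroup_prime_power:
  assumes "finite (carrier G)" "Factorial_Ring.prime p" "order G = p ^ n" "subgroup H G"
  obtains m where "m \<le> n" "card H = p ^ m"
proof -
  have "card H dvd order G"
    using lagrange[OF assms(4)] by (metis dvd_triv_right)
  then show ?thesis
    using that divides_primepow_nat[OF assms(2)] assms(3) by auto
qed

lemma (in group) prime_mult_card_dvd_card_of_psubset: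
  assumes fin: "finite (carrier G)" and p: "Factorial_Ring.prime p" and ord: "order G = p ^ n"
    and H: "subgroup H G" and K: "subgroup K G" and HK: "H \<subset> K"
  shows "p * card H dvd card K"
proof -
  obtain i j where i: "card H = p ^ i" and j: "card K = p ^ j"
    using card_subgroup_prime_power[OF fin p ord H] card_subgroup_prime_power[OF fin p ord K]
    by metis
  have "finite K"
    using subgroup.subset[OF K] fin finite_subset by blast
  then have "p ^ i < p ^ j"
    using psubset_card_mono[OF _ HK] i j by simp
  then have "i < j"
    using power_less_imp_less_exp[OF prime_gt_1_nat[OF p]] by blast
  then have "p ^ Suc i dvd p ^ j"
    by (intro le_imp_power_dvd) simp
  then show ?thesis
    using i j by simp
qed

lemma (in group) card_subgroup_dvd_sum_of_invariant:
  fixes f :: "'a \<Rightarrow> 'c::comm_semiring_1"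
  assumes fin: "finite (carrier G)" and H: "subgroup H G" and S: "S \<subseteq> carrier G"
    and closed: "\<And>h x. h \<in> H \<Longrightarrow> x \<in> S \<Longrightarrow> h \<otimes> x \<in> S"
    and invariant: "\<And>h x. h \<in> H \<Longrightarrow> x \<in> S \<Longrightarrow> f (h \<otimes> x) = f x"
  shows "of_nat (card H) dvd (\<Sum>x\<in>S. f x)"
proof -
  have finS: "finite S"
    using fin S finite_subset by blast
  have HG: "H \<subseteq> carrier G"
    using H by (rule subgroup.subset)
  have coset_sum: "(\<Sum>x\<in>{x \<in> S. H #> x = H #> y}. f x) = of_nat (card H) * f y"
    if y: "y \<in> S" for y
  proof -
    have "x \<in> H #> x" if "x \<in> S" for x
      using that S H by (blast intro: rcos_self)
    moreover have "x \<in> S \<and> H #> x = H #> y \<and> f x = f y" if "x \<in> H #> y" for x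
    proof -
      obtain h where h: "h \<in> H" "x = h \<otimes> y"
        using \<open>x \<in> H #> y\<close> unfolding r_coset_def by blast
      then show ?thesis
        using closed invariant y repr_independence[OF \<open>x \<in> H #> y\<close> _ H] S by auto
    qed
    ultimately have "{x \<in> S. H #> x = H #> y} = H #> y" and "\<forall>x \<in> H #> y. f x = f y"
      by blast+
    moreover have "card (H #> y) = card H"
      using card_rcosets_equal[OF rcosetsI[OF HG] HG] y S by auto
    ultimately show ?thesis
      by simp
  qed
  have "(\<Sum>x\<in>S. f x) = (\<Sum>c\<in>(\<lambda>x. H #> x) ` S. \<Sum>x\<in>{x \<in> S. H #> x = c}. f x)"
    using sum.group[of S "(\<lambda>x. H #> x) ` S" "\<lambda>x. H #> x" f] finS by simp
  also have "of_nat (card H) dvd \<dots>"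
  proof (rule dvd_sum)
    fix c
    assume "c \<in> (\<lambda>x. H #> x) ` S"
    then obtain y where "y \<in> S" "c = H #> y"
      by blast
    then show "of_nat (card H) dvd (\<Sum>x\<in>{x \<in> S. H #> x = c}. f x)"
      using coset_sum by simp
  qed
  finally show ?thesis .
qed

lemma sum_card_Int_eq_sum_card_members:
  assumes "finite M" and "finite T"
  shows "(\<Sum>A\<in>M. card (A \<inter> T)) = (\<Sum>x\<in>T. card {A \<in> M. x \<in> A})"
proof -
  have "(\<Sum>A\<in>M. card (A \<inter> T)) = (\<Sum>A\<in>M. \<Sum>x\<in>T. if x \<in> A then 1 else 0)"
    using assms(2) by (simp add: sum.If_cases Int_commute)
  also have "\<dots> = (\<Sum>x\<in>T. \<Sum>A\<in>M. if x \<in> A then 1 else 0)"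
    by (rule sum.swap)
  also have "\<dots> = (\<Sum>x\<in>T. card {A \<in> M. x \<in> A})"
    using assms(1) by (simp add: sum.If_cases Int_def)
  finally show ?thesis .
qed

lemma mod_eq_1_of_cancel_common_factor:
  fixes m z p a b :: nat
  assumes eq: "a + z = m * z + b" and a: "p * z dvd a" and b: "p * z dvd b"
    and z: "0 < z" and p: "1 < p"
  shows "m mod p = 1"
proof -
  have "z mod (p * z) = (a + z) mod (p * z)"
    using a by (simp flip: mod_add_left_eq)
  also have "\<dots> = (m * z + b) mod (p * z)"
    by (simp only: eq)
  also have "\<dots> = (m * z) mod (p * z)"
    using b by (simp flip: mod_add_right_eq)
  also have "\<dots> = (m mod p) * z"
    by (rule mod_mult_mult2)
  finally have "z mod (p * z) = (m mod p) * z" .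
  moreover have "z mod (p * z) = z"
    using z p by simp
  ultimately show ?thesis
    using z by simp
qed

lemma (in group) mult_mem_subgroup_iff:
  assumes H: "subgroup H G" and h: "h \<in> H" and x: "x \<in> carrier G"
  shows "h \<otimes> x \<in> H \<longleftrightarrow> x \<in> H"
proof
  assume "h \<otimes> x \<in> H"
  then have "inv h \<otimes> (h \<otimes> x) \<in> H"
    using subgroup.m_closed[OF H subgroup.m_inv_closed[OF H h]] by blast
  then show "x \<in> H"
    using subgroup.mem_carrier[OF H h] x by (simp flip: m_assoc)
qed (rule subgroup.m_closed[OF H h])

lemma (in group) centralizer_psubset_of_noncentral:
  assumes "x \<in> carrier G - center G"
  shows "centralizer G {x} \<subset> carrier G"
proof -
  have "centralizer G {x} \<noteq> carrier G"
  proof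
    assume all: "centralizer G {x} = carrier G"
    have "x \<in> center G"
      unfolding center_def
    proof (rule centralizerI)
      show "x \<otimes> g = g \<otimes> x" if "g \<in> carrier G" for g
        using centralizerD[of g G "{x}" x] that all by simp
    qed (use assms in blast)
    then show False
      using assms by blast
  qed
  then show ?thesis
    using centralizer_subset_carrier[of G "{x}"] by blast
qed

lemma (in group) sum_card_maximal_abelian_subgroups:
  assumes fin: "finite (carrier G)"
  shows "(\<Sum>A\<in>{A. maximal_abelian_subgroup A G}. card A) =
    card {A. maximal_abelian_subgroup A G} * card (center G) +
    (\<Sum>x\<in>carrier G - center G. card {A. maximal_abelian_subgroup A G \<and> x \<in> A})"
proof -
  let ?M = "{A. maximal_abelian_subgroup A G}"
  have AG: "A \<subseteq> carrier G" if "A \<in> ?M" for A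
    using that centralizer_subset_carrier[of G A]
    by (simp add: maximal_abelian_subgroup_iff_self_centralizing)
  have "card A = card (center G) + card (A \<inter> (carrier G - center G))" if "A \<in> ?M" for A
  proof -
    have "A \<inter> (carrier G - center G) = A - center G"
      using AG[OF that] by blast
    moreover have "finite A"
      using fin AG[OF that] finite_subset by blast
    ultimately show ?thesis
      using center_subset_maximal_abelian_subgroup[of A] that card_Diff_subset[of "center G" A]
        card_mono[of A "center G"] finite_subset[of "center G" A]
      by simp
  qed
  then have "(\<Sum>A\<in>?M. card A) =
      card ?M * card (center G) + (\<Sum>A\<in>?M. card (A \<inter> (carrier G - center G)))"
    by (simp add: sum.distrib)
  also have "(\<Sum>A\<in>?M. card (A \<inter> (carrier G - center G))) =
      (\<Sum>x\<in>carrier G - center G. card {A \<in> ?M. x \<in> A})"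
    using fin AG by (intro sum_card_Int_eq_sum_card_members) (auto intro: finite_subset[of ?M "Pow (carrier G)"])
  finally show ?thesis
    by simp
qed

lemma (in group) maximal_abelian_subgroups_containing_center_mult:
  assumes z: "z \<in> center G" and x: "x \<in> carrier G"
  shows "{A. maximal_abelian_subgroup A G \<and> z \<otimes> x \<in> A} =
    {A. maximal_abelian_subgroup A G \<and> x \<in> A}"
proof -
  have "z \<otimes> x \<in> A \<longleftrightarrow> x \<in> A" if "maximal_abelian_subgroup A G" for A
    using mult_mem_subgroup_iff[of A z x] center_subset_maximal_abelian_subgroup[OF that] that z x
    by (auto simp: maximal_abelian_subgroup_def abelian_subgroup_def)
  then show ?thesis
    by blast
qed

lemma (in group) card_maximal_abelian_subgroups_mod_prime:
  assumes fin: "finite (carrier G)" and p: "Factorial_Ring.prime p" and ord: "order G = p ^ n"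
    and noncentral: "\<And>x. x \<in> carrier G - center G \<Longrightarrow>
      card {A. maximal_abelian_subgroup A G \<and> x \<in> A} mod p = 1"
  shows "card {A. maximal_abelian_subgroup A G} mod p = 1"
proof (cases "center G = carrier G")
  case True
  then show ?thesis
    using prime_gt_1_nat[OF p] by (simp add: maximal_abelian_subgroups_of_abelian)
next
  case False
  let ?Z = "center G"
  let ?M = "{A. maximal_abelian_subgroup A G}"
  define f where "f x = card {A. maximal_abelian_subgroup A G \<and> x \<in> A}" for x
  let ?k = "\<Sum>x\<in>carrier G - ?Z. f x div p"
  have Z: "subgroup ?Z G"
    by (rule subgroup_center)
  have ZG: "?Z \<subset> carrier G"
    using False subgroup.subset[OF Z] by blast
  have "(\<Sum>x\<in>carrier G - ?Z. f x) = (\<Sum>x\<in>carrier G - ?Z. 1 + p * (f x div p))"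
  proof (rule sum.cong)
    fix x
    assume "x \<in> carrier G - ?Z"
    then have "f x mod p = 1"
      using noncentral[of x] by (simp add: f_def)
    then show "f x = 1 + p * (f x div p)"
      using mult_div_mod_eq[of p "f x"] by simp
  qed simp
  also have "\<dots> = card (carrier G - ?Z) + p * ?k"
    by (simp only: sum.distrib sum_distrib_left) simp
  finally have "(\<Sum>A\<in>?M. card A) = card ?M * card ?Z + (card (carrier G - ?Z) + p * ?k)"
    using sum_card_maximal_abelian_subgroups[OF fin] by (simp add: f_def)
  moreover have "card (carrier G - ?Z) + card ?Z = order G"
    using card_Diff_subset[of ?Z "carrier G"] card_mono[of "carrier G" ?Z] ZG fin
      finite_subset[of ?Z "carrier G"]
    by (simp add: order_def)
  ultimately have count: "(\<Sum>A\<in>?M. card A) + card ?Z = card ?M * card ?Z + (order G + p * ?k)"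
    by simp
  have "card ?Z dvd ?k"
  proof (rule card_subgroup_dvd_sum_of_invariant[OF fin Z, where 'c = nat, simplified])
    show "h \<otimes> x \<in> carrier G - ?Z" if "h \<in> ?Z" "x \<in> carrier G - ?Z" for h x
      using that mult_mem_subgroup_iff[OF Z] subgroup.mem_carrier[OF Z] by auto
    show "f (h \<otimes> x) div p = f x div p" if "h \<in> ?Z" "x \<in> carrier G - ?Z" for h x
      using that by (simp add: f_def maximal_abelian_subgroups_containing_center_mult)
  qed blast
  then have "p * card ?Z dvd order G + p * ?k"
    using prime_mult_card_dvd_card_of_psubset[OF fin p ord Z subgroup_self ZG]
    by (simp add: order_def)
  moreover have "p * card ?Z dvd (\<Sum>A\<in>?M. card A)"
    using prime_mult_card_dvd_card_of_psubset[OF fin p ord Z] center_psubset_maximal_abelian_subgroup[OF False]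
    by (auto simp: maximal_abelian_subgroup_def abelian_subgroup_def intro: dvd_sum)
  moreover have "card ?Z > 0"
    using subgroup.one_closed[OF Z] finite_subset[of ?Z "carrier G"] fin ZG
    by (auto simp: card_gt_0_iff)
  ultimately show ?thesis
    using mod_eq_1_of_cancel_common_factor[OF count] prime_gt_1_nat[OF p] by simp
qed

lemma (in group) card_centralizer_of_noncentral:
  assumes fin: "finite (carrier G)" and p: "Factorial_Ring.prime p" and ord: "order G = p ^ n"
    and x: "x \<in> carrier G - center G"
  obtains m where "m < n" and "card (centralizer G {x}) = p ^ m"
proof -
  have C: "subgroup (centralizer G {x}) G"
    using x by (simp add: subgroup_centralizer)
  obtain m where m: "card (centralizer G {x}) = p ^ m"
    using card_subgroup_prime_power[OF fin p ord C] by blast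
  have "p ^ Suc m dvd p ^ n"
    using prime_mult_card_dvd_card_of_psubset[OF fin p ord C subgroup_self
        centralizer_psubset_of_noncentral[OF x]] m ord
    by (simp add: order_def)
  then have "m < n"
    using power_dvd_imp_le[of p "Suc m" n] prime_gt_1_nat[OF p] by simp
  then show ?thesis
    using that m by blast
qed

theorem mainTheorem1:
  fixes G (structure) and p :: nat and n :: nat
  assumes "group G" and "finite (carrier G)" and "Factorial_Ring.prime p"
    and "order G = p ^ n"
  shows "card {A. maximal_abelian_subgroup A G} mod p = 1"
  using assms(1,2,4)
proof (induction n arbitrary: G rule: less_induct)
  case (less n)
  interpret group G
    by (rule less.prems(1))
  show ?case
  proof (rule card_maximal_abelian_subgroups_mod_prime[OF less.prems(2) assms(3) less.prems(3)])
    fix x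
    assume x: "x \<in> carrier G - center G"
    let ?C = "centralizer G {x}"
    obtain m where "m < n" and "card ?C = p ^ m"
      using card_centralizer_of_noncentral[OF less.prems(2) assms(3) less.prems(3) x] .
    moreover have "group (G\<lparr>carrier := ?C\<rparr>)" and "finite ?C"
      using x less.prems(2) centralizer_subset_carrier[of G "{x}"]
      by (auto simp: subgroup_imp_group subgroup_centralizer intro: finite_subset)
    ultimately have "card {A. maximal_abelian_subgroup A (G\<lparr>carrier := ?C\<rparr>)} mod p = 1"
      using less.IH[of m "G\<lparr>carrier := ?C\<rparr>"] by (simp add: order_def)
    then show "card {A. maximal_abelian_subgroup A G \<and> x \<in> A} mod p = 1"
      using x by (simp add: maximal_abelian_subgroups_containing)
  qed
qed

end
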